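(* For every $\alpha\in(0,\pi/2]$, the system of two equations in the real unknowns $(d,u_1)$ $$3(1+\cos\alpha)d^2+8\cos\Big(\frac{\alpha}{2}\Big)d\,u_1+6u_1^2-10(1+\alpha\csc\alpha)=0,$$ $$4d^6-24d^4+57d^2-12\sec\Big(\frac{\alpha}{2}\Big)d(d^2-3)u_1+9\sec^2\Big(\frac{\alpha}{2}\Big)u_1^2+105\csc^2\Big(\frac{\alpha}{2}\Big)\big(1-\alpha\csc\alpha\big)=0$$ has at least two real solutions with $d>0$.
   Context: Here $\csc=1/\sin$ and $\sec=1/\cos$. The system describes (in the symmetric case $u_1=u_2$, $v_2=-v_1$) the degree-7 Pythagorean-hodograph curves interpolating the end points, tangent directions, curvatures and arc length of a circular arc of inner angle $2\alpha$ in canonical position. *)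

theory Defs
  imports Complex_Main
begin

definition eq1 :: "real \<Rightarrow> real \<Rightarrow> real \<Rightarrow> real" where
  "eq1 \<alpha> d u = 3 * (1 + cos \<alpha>) * d^2 + 8 * cos (\<alpha> / 2) * d * u + 6 * u^2
                 - 10 * (1 + \<alpha> * (1 / sin \<alpha>))"

definition eq2 :: "real \<Rightarrow> real \<Rightarrow> real \<Rightarrow> real" where
  "eq2 \<alpha> d u = 4 * d^6 - 24 * d^4 + 57 * d^2
                 - 12 * (1 / cos (\<alpha> / 2)) * d * (d^2 - 3) * u
                 + 9 * (1 / cos (\<alpha> / 2))^2 * u^2
                 + 105 * (1 / sin (\<alpha> / 2))^2 * (1 - \<alpha> * (1 / sin \<alpha>))"

end

theory Submission
  imports Defs
begin

(* Put h = alpha/2 and u = v cos h. Then eq2 becomes (2d^3 - 6d - 3v)^2 - 21 (P - d^2) with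
   P = 5 (h - sin h cos h) / (sin^3 h cos h), and eq1 becomes a positive multiple of
   3d^2 + 4dv + 3v^2 - (10 + (10 + P) tan^2 h). Along the lower branch
   v = (2d^3 - 6d - sqrt (21 (P - d^2))) / 3 of the first curve, the second expression is
   positive at d = 13/10, negative at d = 17/10 and positive at d = sqrt P, so the intermediate
   value theorem gives two solutions. This sign pattern only needs
   10/3 + 2 tan^2 h <= P <= 10/3 + 3 tan^2 h, which follows from the Cusa-Huygens and Huygens
   inequalities 3 sin h / (2 + cos h) <= h <= (2 sin h + tan h) / 3. *)

definition arc_coeff :: "real \<Rightarrow> real" where
  "arc_coeff h = 5 * (h - sin h * cos h) / (sin h ^ 3 * cos h)"

lemma three_sin_div_two_plus_cos_le:
  fixes x :: real
  assumes "0 \<le> x"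
  shows "3 * sin x / (2 + cos x) \<le> x"
proof -
  let ?f = "\<lambda>x::real. x - 3 * sin x / (2 + cos x)"
  have "?f 0 \<le> ?f x"
  proof (rule DERIV_nonneg_imp_nondecreasing[OF assms])
    fix y :: real
    have pos: "2 + cos y > 0"
      using cos_ge_minus_one[of y] by linarith
    have "(?f has_real_derivative
            1 - (3 * cos y * (2 + cos y) + 3 * sin y * sin y) / (2 + cos y)^2) (at y)"
      using pos by (auto intro!: derivative_eq_intros simp: power2_eq_square)
    moreover have "1 - (3 * cos y * (2 + cos y) + 3 * sin y * sin y) / (2 + cos y)^2
                   = (1 - cos y)^2 / (2 + cos y)^2"
    proof -
      have "3 * cos y * (2 + cos y) + 3 * sin y * sin y = 6 * cos y + 3"
        using sin_cos_squared_add3[of y] by algebra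
      moreover have "(2 + cos y)^2 \<noteq> 0"
        using pos by simp
      ultimately show ?thesis
        by (simp add: field_simps) (simp add: power2_eq_square algebra_simps)
    qed
    ultimately show "\<exists>D. (?f has_real_derivative D) (at y) \<and> 0 \<le> D"
      by auto
  qed
  then show ?thesis by simp
qed

lemma le_two_sin_plus_tan_div_three:
  fixes x :: real
  assumes "0 \<le> x" and "x < pi / 2"
  shows "x \<le> (2 * sin x + tan x) / 3"
proof -
  let ?f = "\<lambda>x::real. 2 * sin x + tan x - 3 * x"
  have "?f 0 \<le> ?f x"
  proof (rule DERIV_nonneg_imp_nondecreasing[OF assms(1)])
    fix y :: real
    assume "0 \<le> y" "y \<le> x"
    then have pos: "cos y > 0"
      using assms by (intro cos_gt_zero_pi) auto
    have "(?f has_real_derivative 2 * cos y + inverse ((cos y)^2) - 3) (at y)"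
      using pos by (auto intro!: derivative_eq_intros)
    moreover have "2 * cos y + inverse ((cos y)^2) - 3 = (1 - cos y)^2 * (2 * cos y + 1) / (cos y)^2"
      using pos by (simp add: field_simps power2_eq_square)
    ultimately show "\<exists>D. (?f has_real_derivative D) (at y) \<and> 0 \<le> D"
      using pos by fastforce
  qed
  then show ?thesis by simp
qed

lemma cos_gt_seven_tenths:
  fixes h :: real
  assumes "0 \<le> h" and "h \<le> pi / 4"
  shows "7/10 < cos h"
proof -
  have "7/5 < sqrt 2"
    by (rule real_less_rsqrt) (simp add: power2_eq_square)
  moreover have "cos (pi / 4) \<le> cos h"
    using assms by (intro cos_monotone_0_pi_le) auto
  ultimately show ?thesis
    by (simp add: cos_45)
qed

lemma tan_square_le_one:
  fixes h :: real
  assumes "0 \<le> h" and "h \<le> pi / 4"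
  shows "(tan h)\<^sup>2 \<le> 1"
proof -
  have "h < pi / 2"
    using assms pi_gt_zero by linarith
  then have "0 \<le> tan h" and "tan h \<le> tan (pi / 4)"
    using assms by (auto intro: tan_pos_pi2_le tan_mono_le)
  then show ?thesis
    by (simp add: tan_45 power_le_one)
qed

lemma arc_coeff_ge:
  fixes h :: real
  assumes "0 < h" and "h \<le> pi / 4"
  shows "10/3 + 2 * (tan h)\<^sup>2 \<le> arc_coeff h"
proof -
  define s c where "s = sin h" and "c = cos h"
  have s_pos: "0 < s"
    unfolding s_def using assms pi_gt_zero by (intro sin_gt_zero) auto
  have c_gt: "7/10 < c"
    unfolding c_def using assms by (intro cos_gt_seven_tenths) auto
  have sc: "s\<^sup>2 = 1 - c\<^sup>2"
    unfolding s_def c_def by (rule sin_squared_eq)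
  then have s_cube: "s ^ 3 = s * (1 - c\<^sup>2)"
    by (simp add: power3_eq_cube power2_eq_square)
  have "(7/10)\<^sup>2 < c\<^sup>2"
    using c_gt by (intro power_strict_mono) auto
  then have "49/100 < c\<^sup>2"
    by (simp add: power2_eq_square)
  moreover have "0 \<le> c ^ 3"
    using c_gt by simp
  ultimately have "0 < 4 * c ^ 3 + 16 * c\<^sup>2 + 15 * c - 12"
    using c_gt by linarith
  then have "0 \<le> s * c * (1 - c)\<^sup>2 * (4 * c ^ 3 + 16 * c\<^sup>2 + 15 * c - 12) / (2 + c)"
    using s_pos c_gt by simp
  also have "\<dots> = 15 * c\<^sup>2 * (3 * s / (2 + c) - s * c) - (4 * c\<^sup>2 + 6) * (s ^ 3 * c)"
    unfolding s_cube using c_gt by (simp add: field_simps power2_eq_square power3_eq_cube)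
  finally have "(4 * c\<^sup>2 + 6) * (s ^ 3 * c) \<le> 15 * c\<^sup>2 * (3 * s / (2 + c) - s * c)"
    by simp
  also have "\<dots> \<le> 15 * c\<^sup>2 * (h - s * c)"
    using three_sin_div_two_plus_cos_le[of h] assms unfolding s_def c_def
    by (intro mult_left_mono) auto
  finally have key: "(4 * c\<^sup>2 + 6) * (s ^ 3 * c) \<le> 15 * c\<^sup>2 * (h - s * c)" .
  have "10/3 + 2 * (tan h)\<^sup>2 = (4 * c\<^sup>2 + 6) / (3 * c\<^sup>2)"
    unfolding tan_def s_def[symmetric] c_def[symmetric] using c_gt sc
    by (simp add: power_divide field_simps)
  also have "\<dots> \<le> 5 * (h - s * c) / (s ^ 3 * c)"
    using key s_pos c_gt by (simp add: divide_simps) (simp add: algebra_simps)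
  finally show ?thesis
    unfolding arc_coeff_def s_def c_def .
qed

lemma arc_coeff_le:
  fixes h :: real
  assumes "0 < h" and "h < pi / 2"
  shows "arc_coeff h \<le> 10/3 + 3 * (tan h)\<^sup>2"
proof -
  define s c where "s = sin h" and "c = cos h"
  have s_pos: "0 < s"
    unfolding s_def using assms pi_gt_zero by (intro sin_gt_zero) auto
  have c_pos: "0 < c"
    unfolding c_def using assms by (intro cos_gt_zero_pi) auto
  have "c \<le> 1"
    unfolding c_def by simp
  then have "c\<^sup>2 \<le> 1"
    using c_pos by (simp add: power_le_one)
  have sc: "s\<^sup>2 = 1 - c\<^sup>2"
    unfolding s_def c_def by (rule sin_squared_eq)
  then have s_cube: "s ^ 3 = s * (1 - c\<^sup>2)"
    by (simp add: power3_eq_cube power2_eq_square)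
  have "15 * c\<^sup>2 * (h - s * c) \<le> 15 * c\<^sup>2 * ((2 * s + s / c) / 3 - s * c)"
    using le_two_sin_plus_tan_div_three[of h] assms unfolding s_def c_def tan_def
    by (intro mult_left_mono) auto
  also have "\<dots> = (c\<^sup>2 + 9) * (s ^ 3 * c) - s * c * (1 - c)\<^sup>2 * (4 - 2 * c - c\<^sup>2)"
    unfolding s_cube using c_pos by (simp add: field_simps power2_eq_square power3_eq_cube)
  also have "\<dots> \<le> (c\<^sup>2 + 9) * (s ^ 3 * c)"
    using s_pos c_pos \<open>c \<le> 1\<close> \<open>c\<^sup>2 \<le> 1\<close> by simp
  finally have key: "15 * c\<^sup>2 * (h - s * c) \<le> (c\<^sup>2 + 9) * (s ^ 3 * c)" .
  have "arc_coeff h = 5 * (h - s * c) / (s ^ 3 * c)"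
    unfolding arc_coeff_def s_def c_def ..
  also have "\<dots> \<le> (c\<^sup>2 + 9) / (3 * c\<^sup>2)"
    using key s_pos c_pos by (simp add: divide_simps) (simp add: algebra_simps)
  also have "\<dots> = 10/3 + 3 * (tan h)\<^sup>2"
    unfolding tan_def s_def[symmetric] c_def[symmetric] using c_pos sc
    by (simp add: power_divide field_simps)
  finally show ?thesis .
qed

definition lower_branch :: "real \<Rightarrow> real \<Rightarrow> real" where
  "lower_branch P d = (2 * d ^ 3 - 6 * d - sqrt (21 * (P - d\<^sup>2))) / 3"

definition reduced_eq1 :: "real \<Rightarrow> real \<Rightarrow> real \<Rightarrow> real \<Rightarrow> real" where
  "reduced_eq1 P e d v = 3 * d\<^sup>2 + 4 * d * v + 3 * v\<^sup>2 - (10 + (10 + P) * e)"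

lemma eq1_double_angle:
  assumes "sin h \<noteq> 0" and "cos h \<noteq> 0"
  shows "eq1 (2 * h) d (cos h * v) = 2 * (cos h)\<^sup>2 * reduced_eq1 (arc_coeff h) ((tan h)\<^sup>2) d v"
  using assms unfolding eq1_def reduced_eq1_def arc_coeff_def tan_def sin_double cos_double_cos
  by (simp add: field_simps power2_eq_square power3_eq_cube)
    (use sin_cos_squared_add3[of h] in algebra)

lemma eq2_double_angle:
  assumes "sin h \<noteq> 0" and "cos h \<noteq> 0"
  shows "eq2 (2 * h) d (cos h * v) = (2 * d ^ 3 - 6 * d - 3 * v)\<^sup>2 - 21 * (arc_coeff h - d\<^sup>2)"
  using assms unfolding eq2_def arc_coeff_def sin_double
  by (simp add: field_simps power2_eq_square power3_eq_cube eval_nat_numeral)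

lemma lower_branch_on_curve:
  assumes "d\<^sup>2 \<le> P"
  shows "(2 * d ^ 3 - 6 * d - 3 * lower_branch P d)\<^sup>2 = 21 * (P - d\<^sup>2)"
proof -
  have "2 * d ^ 3 - 6 * d - 3 * lower_branch P d = sqrt (21 * (P - d\<^sup>2))"
    by (simp add: lower_branch_def field_simps)
  then show ?thesis
    using assms by simp
qed

context
  fixes P e :: real
  assumes P_ge: "10/3 + 2 * e \<le> P" and P_le: "P \<le> 10/3 + 3 * e"
    and e_nonneg: "0 \<le> e" and e_le_one: "e \<le> 1"
begin

lemma e_mult_self_le: "e * e \<le> e"
  using e_nonneg e_le_one by (simp add: mult_left_le)

lemma reduced_eq1_lower_branch_13_10: "0 < reduced_eq1 P e (13/10) (lower_branch P (13/10))"
proof -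
  define t where "t = sqrt (21 * (P - (13/10)\<^sup>2))"
  have t_sq: "t\<^sup>2 = 21 * (P - (13/10)\<^sup>2)"
    using P_ge e_nonneg by (simp add: t_def power2_eq_square)
  have "5 \<le> t"
    unfolding t_def using P_ge e_nonneg by (intro real_le_rsqrt) (simp add: power2_eq_square)
  moreover have "reduced_eq1 P e (13/10) (lower_branch P (13/10))
                 = 758303/250000 + 403/750 * t + t\<^sup>2 / 3 - 10 - 10 * e - P * e"
    unfolding reduced_eq1_def lower_branch_def t_def[symmetric]
    by (simp add: power2_eq_square power3_eq_cube field_simps)
  moreover have "P * e \<le> (10/3 + 3 * e) * e"
    using P_le e_nonneg by (rule mult_right_mono)
  ultimately show ?thesis
    using t_sq P_ge e_mult_self_le e_le_one by (simp add: algebra_simps power2_eq_square)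
qed

lemma reduced_eq1_lower_branch_17_10: "reduced_eq1 P e (17/10) (lower_branch P (17/10)) < 0"
proof -
  define t where "t = sqrt (21 * (P - (17/10)\<^sup>2))"
  have t_sq: "t\<^sup>2 = 21 * (P - (17/10)\<^sup>2)"
    using P_ge e_nonneg by (simp add: t_def power2_eq_square)
  have "3 + 3 * e \<le> t"
    unfolding t_def using P_ge e_mult_self_le e_nonneg
    by (intro real_le_rsqrt) (simp add: power2_eq_square algebra_simps)
  moreover have "reduced_eq1 P e (17/10) (lower_branch P (17/10))
                 = 1967223/250000 - 1513/750 * t + t\<^sup>2 / 3 - 10 - 10 * e - P * e"
    unfolding reduced_eq1_def lower_branch_def t_def[symmetric]
    by (simp add: power2_eq_square power3_eq_cube field_simps)
  moreover have "10/3 * e \<le> P * e"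
    using P_ge e_nonneg by (intro mult_right_mono) auto
  ultimately show ?thesis
    using t_sq P_le e_mult_self_le e_le_one by (simp add: algebra_simps power2_eq_square)
qed

lemma reduced_eq1_lower_branch_sqrt: "0 < reduced_eq1 P e (sqrt P) (lower_branch P (sqrt P))"
proof -
  define p where "p = P - 10/3"
  define r where "r = sqrt P"
  have r_sq: "r\<^sup>2 = P"
    using P_ge e_nonneg by (simp add: r_def)
  then have branch: "lower_branch P r = (2 * r ^ 3 - 6 * r) / 3"
    by (simp add: lower_branch_def)
  have "reduced_eq1 P e r (lower_branch P r)
        = (4 * (r\<^sup>2)^3 - 16 * (r\<^sup>2)\<^sup>2 + 21 * r\<^sup>2) / 3 - 10 - 10 * e - P * e"
    unfolding branch reduced_eq1_def by (simp add: field_simps eval_nat_numeral)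
  also have "\<dots> = (4 * P^3 - 16 * P\<^sup>2 + 21 * P) / 3 - 10 - 10 * e - P * e"
    by (simp only: r_sq)
  also have "\<dots> = 1090/81 + 143/9 * p + 8 * p\<^sup>2 + 4/3 * p^3 - 10 - 10 * e - 10/3 * e - p * e"
    unfolding p_def by (simp add: power2_eq_square power3_eq_cube field_simps)
  finally have expand: "reduced_eq1 P e r (lower_branch P r)
      = 1090/81 + 143/9 * p + 8 * p\<^sup>2 + 4/3 * p^3 - 10 - 10 * e - 10/3 * e - p * e" .
  have p_bounds: "2 * e \<le> p" "p \<le> 3 * e"
    using P_ge P_le by (auto simp: p_def)
  then have "p * e \<le> (3 * e) * e"
    using e_nonneg by (intro mult_right_mono) auto
  then have "p * e \<le> 3 * e"
    using e_mult_self_le by linarith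
  moreover have "0 \<le> p\<^sup>2" "0 \<le> p^3"
    using p_bounds e_nonneg by auto
  ultimately show ?thesis
    unfolding r_def[symmetric] expand using p_bounds e_mult_self_le by linarith
qed

lemma lower_branch_two_zeros:
  obtains d1 d2 where "0 < d1" and "d1 < d2" and "d2\<^sup>2 \<le> P"
    and "reduced_eq1 P e d1 (lower_branch P d1) = 0"
    and "reduced_eq1 P e d2 (lower_branch P d2) = 0"
proof -
  let ?G = "\<lambda>d. reduced_eq1 P e d (lower_branch P d)"
  have cont: "continuous_on {a..b} ?G" for a b
    unfolding reduced_eq1_def lower_branch_def by (intro continuous_intros) auto
  have "17/10 < sqrt P"
    using P_ge e_nonneg by (intro real_less_rsqrt) (simp add: power2_eq_square)
  then obtain d2 where d2: "17/10 \<le> d2" "d2 \<le> sqrt P" "?G d2 = 0"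
    using IVT'[of ?G "17/10" 0 "sqrt P", OF _ _ _ cont]
      reduced_eq1_lower_branch_17_10 reduced_eq1_lower_branch_sqrt by auto
  obtain d1 where d1: "13/10 \<le> d1" "d1 \<le> 17/10" "?G d1 = 0"
    using IVT2'[of ?G "17/10" 0 "13/10", OF _ _ _ cont]
      reduced_eq1_lower_branch_17_10 reduced_eq1_lower_branch_13_10 by auto
  have "d1 \<noteq> 17/10"
    using d1(3) reduced_eq1_lower_branch_17_10 by (metis less_irrefl)
  moreover have "d2\<^sup>2 \<le> (sqrt P)\<^sup>2"
    using d2 by (intro power_mono) auto
  moreover have "(sqrt P)\<^sup>2 = P"
    using P_ge e_nonneg by simp
  ultimately show thesis
    using d1 d2 by (intro that[of d1 d2]) auto
qed

end

theorem lemma4: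
  fixes \<alpha> :: real
  assumes "0 < \<alpha>" and "\<alpha> \<le> pi / 2"
  shows "\<exists>S :: (real \<times> real) set. card S \<ge> 2 \<and> finite S \<and>
           (\<forall>(d, u) \<in> S. d > 0 \<and> eq1 \<alpha> d u = 0 \<and> eq2 \<alpha> d u = 0)"
proof -
  define h where "h = \<alpha> / 2"
  define P e where "P = arc_coeff h" and "e = (tan h)\<^sup>2"
  have h: "0 < h" "h \<le> pi / 4"
    using assms by (auto simp: h_def)
  then have nonzero: "sin h \<noteq> 0" "cos h \<noteq> 0"
    using pi_gt_zero sin_gt_zero[of h] cos_gt_zero_pi[of h] by auto
  have \<alpha>_eq: "\<alpha> = 2 * h"
    by (simp add: h_def)
  have solution: "eq1 \<alpha> d (cos h * lower_branch P d) = 0 \<and> eq2 \<alpha> d (cos h * lower_branch P d) = 0"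
    if "d\<^sup>2 \<le> P" and "reduced_eq1 P e d (lower_branch P d) = 0" for d
    using that lower_branch_on_curve[OF that(1)]
    unfolding \<alpha>_eq eq1_double_angle[OF nonzero] eq2_double_angle[OF nonzero] P_def e_def
    by simp
  have "10/3 + 2 * e \<le> P" "P \<le> 10/3 + 3 * e" "0 \<le> e" "e \<le> 1"
    using h arc_coeff_ge arc_coeff_le tan_square_le_one pi_gt_zero unfolding P_def e_def by auto
  then obtain d1 d2 where d: "0 < d1" "d1 < d2" "d2\<^sup>2 \<le> P"
    and zeros: "reduced_eq1 P e d1 (lower_branch P d1) = 0" "reduced_eq1 P e d2 (lower_branch P d2) = 0"
    by (rule lower_branch_two_zeros)
  have "d1\<^sup>2 \<le> d2\<^sup>2"
    using d by (intro power_mono) auto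
  then have "d1\<^sup>2 \<le> P"
    using d by linarith
  then show ?thesis
    using d zeros solution
    by (intro exI[of _ "{(d1, cos h * lower_branch P d1), (d2, cos h * lower_branch P d2)}"]) auto
qed

end
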